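(* Let $\Omega\subset\mathbb R^N$ be open and let $T:\Omega\to\mathbb R$ be continuous and such that $\mathrm{epi}(T)$ has locally positive reach. Let $\bar x\in\Omega$. Then $T$ is non-Lipschitz at $\bar x$ if and only if there exists a nonzero vector $\zeta\in\mathbb R^N$ such that $(\zeta,0)\in N_{\mathrm{epi}(T)}(\bar x,T(\bar x))$.
   Context: $\mathrm{epi}(T)=\{(x,y)\in\Omega\times\mathbb R: y\ge T(x)\}$. For a closed set $K$ and $z\in K$, $v\in N_K(z)$ (proximal normal cone) iff there is $\sigma\ge0$ with $\langle v,w-z\rangle\le\sigma\|w-z\|^2$ for all $w\in K$. A locally closed set $K$ has locally positive reach if there is a continuous $\varphi:K\to[0,\infty)$ with $\langle v,w-z\rangle\le\varphi(z)\|v\|\|w-z\|^2$ for all $z,w\in K$ and $v\in N_K(z)$. $T$ is non-Lipschitz at $x$ if there exist sequences $x_i\to x$, $y_i\to x$ with $x_i\neq y_i$ and $\limsup_{i\to\infty}|T(y_i)-T(x_i)|/\|y_i-x_i\|=+\infty$. *)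

theory Defs
  imports "HOL-Analysis.Analysis"
begin

definition epi :: "'a set \<Rightarrow> ('a \<Rightarrow> real) \<Rightarrow> ('a \<times> real) set" where
  "epi \<Omega> T = {(x, y). x \<in> \<Omega> \<and> y \<ge> T x}"

definition proximal_normal :: "'b::real_inner set \<Rightarrow> 'b \<Rightarrow> 'b set" where
  "proximal_normal K z = {v. z \<in> K \<and> (\<exists>\<sigma>\<ge>0. \<forall>w\<in>K. inner v (w - z) \<le> \<sigma> * (norm (w - z))\<^sup>2)}"

definition locally_closed_set :: "'b::metric_space set \<Rightarrow> bool" where
  "locally_closed_set K \<longleftrightarrow> (\<forall>z\<in>K. \<exists>r>0. closed (K \<inter> cball z r))"

definition locally_positive_reach :: "'b::real_inner set \<Rightarrow> bool" where
  "locally_positive_reach K \<longleftrightarrow> locally_closed_set K \<and>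
     (\<exists>\<phi>::'b \<Rightarrow> real. continuous_on K \<phi> \<and> (\<forall>z\<in>K. \<phi> z \<ge> 0) \<and>
        (\<forall>z\<in>K. \<forall>w\<in>K. \<forall>v\<in>proximal_normal K z.
            inner v (w - z) \<le> \<phi> z * norm v * (norm (w - z))\<^sup>2))"

definition non_lipschitz_at :: "'a::real_normed_vector set \<Rightarrow> ('a \<Rightarrow> real) \<Rightarrow> 'a \<Rightarrow> bool" where
  "non_lipschitz_at \<Omega> T x \<longleftrightarrow>
     (\<exists>xs ys :: nat \<Rightarrow> 'a. (\<forall>i. xs i \<in> \<Omega> \<and> ys i \<in> \<Omega> \<and> xs i \<noteq> ys i) \<and>
        xs \<longlonglongrightarrow> x \<and> ys \<longlonglongrightarrow> x \<and>
        limsup (\<lambda>i. ereal (\<bar>T (ys i) - T (xs i)\<bar> / norm (ys i - xs i))) = \<infinity>)"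

end

theory Submission
  imports Defs
begin

text \<open>
  If \<open>T\<close> is not Lipschitz at \<open>xbar\<close>, there are points \<open>x, y\<close> close to \<open>xbar\<close> with
  \<open>T y - T x\<close> much larger than \<open>|y - x|\<close>. The segment from \<open>(x, T x)\<close> to
  \<open>(y, (T x + T y) / 2)\<close> starts in the epigraph and ends outside it, so the distance to
  the epigraph cannot decrease everywhere along it: at some point \<open>P\<close> with nearest point \<open>Q\<close>,
  \<open>P - Q\<close> has nonnegative inner product with the (steep) direction of the segment. Since
  \<open>P - Q\<close> points downwards, the unit proximal normal \<open>(P - Q) / |P - Q|\<close> at \<open>Q\<close> is almost
  horizontal. Letting \<open>x, y \<rightarrow> xbar\<close>, the positive reach inequality passes to the limit and
  gives a horizontal unit normal at \<open>(xbar, T xbar)\<close>.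

  Conversely, testing a normal \<open>(\<zeta>, 0)\<close> against the graph points over \<open>xbar + s \<zeta>\<close> gives
  \<open>s |\<zeta>|\<^sup>2 \<le> \<sigma> (s\<^sup>2 |\<zeta>|\<^sup>2 + (T (xbar + s \<zeta>) - T xbar)\<^sup>2)\<close>, so these increments are at least of
  order \<open>\<surd>s\<close> and the difference quotients are unbounded.
\<close>

definition nearest_point :: "'b::metric_space set \<Rightarrow> 'b \<Rightarrow> 'b \<Rightarrow> bool" where
  "nearest_point K P Q \<longleftrightarrow> Q \<in> K \<and> (\<forall>w\<in>K. dist P Q \<le> dist P w)"

lemma nearest_point_exists_locally_closed:
  fixes K :: "'b::heine_borel set"
  assumes "z \<in> K" "r > 0" "closed (K \<inter> cball z r)" "dist P z < r / 2"
  obtains Q where "nearest_point K P Q"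
proof -
  have "K \<inter> cball z r \<noteq> {}" using assms(1,2) by auto
  then obtain Q where Q: "Q \<in> K \<inter> cball z r" "\<And>w. w \<in> K \<inter> cball z r \<Longrightarrow> dist P Q \<le> dist P w"
    using distance_attains_inf[OF assms(3)] by metis
  have PQ: "dist P Q \<le> dist P z" using Q(2)[of z] assms(1,2) by auto
  have "dist P Q \<le> dist P w" if "w \<in> K" for w
  proof (cases "w \<in> cball z r")
    case False
    then have "r < dist z w" by simp
    then show ?thesis using PQ assms(4) dist_triangle[of z w P] by (simp add: dist_commute)
  qed (use Q(2) that in auto)
  then show ?thesis using that Q(1) unfolding nearest_point_def by blast
qed

lemma nearest_point_infdist:
  assumes "nearest_point K P Q"
  shows "infdist P K = dist P Q"
proof (rule antisym)
  show "infdist P K \<le> dist P Q"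
    using assms unfolding nearest_point_def by (simp add: infdist_le)
  show "dist P Q \<le> infdist P K"
    using assms unfolding nearest_point_def by (subst infdist_notempty) (auto intro!: cINF_greatest)
qed

lemma nearest_point_dist_le:
  assumes "nearest_point K P Q" "z \<in> K"
  shows "dist Q z \<le> 2 * dist P z"
proof -
  have "dist P Q \<le> dist P z" using assms unfolding nearest_point_def by blast
  then show ?thesis using dist_triangle[of Q z P] by (simp add: dist_commute)
qed

lemma nearest_point_proximal_normal:
  fixes K :: "'b::real_inner set"
  assumes "nearest_point K P Q"
  shows "P - Q \<in> proximal_normal K Q"
proof -
  have "inner (P - Q) (w - Q) \<le> 1/2 * (norm (w - Q))\<^sup>2" if "w \<in> K" for w
  proof -
    have "(norm (P - Q))\<^sup>2 \<le> (norm ((P - Q) - (w - Q)))\<^sup>2"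
      using assms that unfolding nearest_point_def by (simp add: dist_norm)
    then show ?thesis
      by (simp add: power2_norm_eq_inner inner_diff_left inner_diff_right inner_commute)
  qed
  then show ?thesis using assms unfolding proximal_normal_def nearest_point_def
    by (intro CollectI conjI exI[of _ "1/2"]) auto
qed

lemma proximal_normal_scaleR:
  assumes "v \<in> proximal_normal K z" "0 \<le> c"
  shows "c *\<^sub>R v \<in> proximal_normal K z"
proof -
  obtain \<sigma> where "z \<in> K" "\<sigma> \<ge> 0" and \<sigma>: "\<And>w. w \<in> K \<Longrightarrow> inner v (w - z) \<le> \<sigma> * (norm (w - z))\<^sup>2"
    using assms(1) unfolding proximal_normal_def by blast
  have "inner (c *\<^sub>R v) (w - z) \<le> (c * \<sigma>) * (norm (w - z))\<^sup>2" if "w \<in> K" for w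
    using mult_left_mono[OF \<sigma>[OF that] assms(2)] by simp
  then show ?thesis unfolding proximal_normal_def using \<open>z \<in> K\<close> \<open>\<sigma> \<ge> 0\<close> assms(2)
    by (intro CollectI conjI exI[of _ "c * \<sigma>"]) auto
qed

lemma norm_add_scaleR_less_if_inner_neg:
  fixes v u :: "'b::real_inner"
  assumes "inner v u < 0" "0 < \<delta>"
  obtains h where "0 < h" "h \<le> \<delta>" "norm (v + h *\<^sub>R u) < norm v"
proof
  define h where "h = min \<delta> (- inner v u / ((norm u)\<^sup>2 + 1))"
  have "0 < - inner v u / ((norm u)\<^sup>2 + 1)"
    using assms(1) by (intro divide_pos_pos) (auto intro: add_nonneg_pos)
  then show h: "0 < h" "h \<le> \<delta>" unfolding h_def using assms(2) by auto
  have "h * (norm u)\<^sup>2 \<le> - inner v u / ((norm u)\<^sup>2 + 1) * (norm u)\<^sup>2"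
    unfolding h_def by (intro mult_right_mono) auto
  also have "\<dots> = - inner v u * ((norm u)\<^sup>2 / ((norm u)\<^sup>2 + 1))" by simp
  also have "\<dots> < - inner v u"
    using mult_strict_left_mono[of "(norm u)\<^sup>2 / ((norm u)\<^sup>2 + 1)" 1 "- inner v u"] assms(1)
    by (simp add: add_nonneg_pos)
  finally have "h * (2 * inner v u + h * (norm u)\<^sup>2) < 0"
    using h(1) assms(1) by (intro mult_pos_neg) (auto simp: power2_eq_square algebra_simps)
  moreover have "(norm (v + h *\<^sub>R u))\<^sup>2 = (norm v)\<^sup>2 + h * (2 * inner v u + h * (norm u)\<^sup>2)"
    by (simp only: power2_norm_eq_inner)
      (simp add: inner_add_left inner_add_right inner_commute algebra_simps)
  ultimately have "(norm (v + h *\<^sub>R u))\<^sup>2 < (norm v)\<^sup>2" by linarith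
  then show "norm (v + h *\<^sub>R u) < norm v" by (rule power2_less_imp_less) simp
qed

lemma continuous_on_right_descent_imp_le:
  fixes f :: "real \<Rightarrow> real"
  assumes "a \<le> b" and cont: "continuous_on {a..b} f"
    and descent: "\<And>s. s \<in> {a..<b} \<Longrightarrow> f a < f s \<Longrightarrow> \<exists>t\<in>{s<..b}. f t < f s"
  shows "f b \<le> f a"
proof (rule ccontr)
  assume "\<not> f b \<le> f a"
  define e where "e = (f a + f b) / 2"
  define S where "S = {s \<in> {a..b}. f s \<le> e}"
  have "closed S" unfolding S_def using cont by (intro continuous_on_closed_Collect_le) auto
  then have "compact S" unfolding compact_eq_bounded_closed S_def
    by (auto intro: bounded_subset[of "{a..b}"])
  moreover have "a \<in> S" unfolding S_def e_def using \<open>\<not> f b \<le> f a\<close> \<open>a \<le> b\<close> by auto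
  ultimately obtain c where c: "c \<in> S" "\<And>t. t \<in> S \<Longrightarrow> t \<le> c"
    using compact_attains_sup by (metis empty_iff)
  have "f c \<le> e" "e \<le> f b" "c \<le> b" using c(1) \<open>\<not> f b \<le> f a\<close> unfolding S_def e_def by auto
  then obtain t where "c \<le> t" "t \<le> b" "f t = e"
    using IVT'[of f c e b] continuous_on_subset[OF cont] c(1) unfolding S_def by auto
  then have "t \<in> S" using c(1) unfolding S_def by auto
  then have fc: "f c = e" using c(2) \<open>c \<le> t\<close> \<open>f t = e\<close> by force
  then have "c \<in> {a..<b}" "f a < f c" using c(1) \<open>\<not> f b \<le> f a\<close> unfolding S_def e_def
    by (fastforce simp: less_le)+
  then obtain t' where "t' \<in> {c<..b}" "f t' < f c" using descent by blast
  then have "t' \<in> S" using c(1) fc unfolding S_def by auto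
  then show False using c(2) \<open>t' \<in> {c<..b}\<close> by force
qed

lemma segment_exit_nearest_point:
  fixes K :: "'b::real_inner set"
  assumes "z \<in> K" "w \<notin> K"
    and near: "\<And>P. P \<in> closed_segment z w \<Longrightarrow> \<exists>Q. nearest_point K P Q"
  obtains P Q where "P \<in> closed_segment z w" "nearest_point K P Q" "P \<noteq> Q"
    "0 \<le> inner (P - Q) (w - z)"
proof -
  define f where "f s = infdist (z + s *\<^sub>R (w - z)) K" for s
  have seg: "z + s *\<^sub>R (w - z) \<in> closed_segment z w" if "s \<in> {0..1}" for s
    using that unfolding closed_segment_def by (auto intro!: exI[of _ s] simp: algebra_simps)
  have "f 0 = 0" using assms(1) unfolding f_def by simp
  moreover have "0 < f 1"
  proof -
    obtain Q where "nearest_point K w Q" using near[of w] by auto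
    then show ?thesis using assms(2) nearest_point_infdist[of K w Q]
      unfolding f_def nearest_point_def by auto
  qed
  moreover have "continuous_on {0..1} f" unfolding f_def by (intro continuous_intros)
  ultimately obtain s where s: "s \<in> {0..<1}" "0 < f s" and up: "\<And>t. t \<in> {s<..1} \<Longrightarrow> f s \<le> f t"
    using continuous_on_right_descent_imp_le[of 0 1 f] by force
  define P where "P = z + s *\<^sub>R (w - z)"
  obtain Q where Q: "nearest_point K P Q" using near seg s unfolding P_def by force
  have fs: "f s = norm (P - Q)"
    using nearest_point_infdist[OF Q] unfolding f_def P_def by (simp add: dist_norm)
  have "0 \<le> inner (P - Q) (w - z)"
  proof (rule ccontr)
    assume "\<not> ?thesis"
    then obtain h where h: "0 < h" "h \<le> 1 - s" "norm (P - Q + h *\<^sub>R (w - z)) < norm (P - Q)"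
      using norm_add_scaleR_less_if_inner_neg[of "P - Q" "w - z" "1 - s"] s(1) by auto
    have "f (s + h) \<le> dist (z + (s + h) *\<^sub>R (w - z)) Q"
      unfolding f_def using Q unfolding nearest_point_def by (simp add: infdist_le)
    also have "\<dots> = norm (P - Q + h *\<^sub>R (w - z))"
      unfolding P_def dist_norm by (simp add: algebra_simps)
    finally have "f (s + h) < f s" using h(3) fs by simp
    then show False using up[of "s + h"] h(1,2) by auto
  qed
  moreover have "P \<noteq> Q" using fs s(2) by auto
  ultimately show ?thesis using that[OF _ Q] seg s(1) unfolding P_def by auto
qed

lemma nearest_point_epi_snd_le:
  fixes T :: "'a::real_normed_vector \<Rightarrow> real"
  assumes "nearest_point (epi \<Omega> T) P Q"
  shows "snd P \<le> snd Q"
proof (rule ccontr)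
  assume "\<not> snd P \<le> snd Q"
  obtain p t q t' where PQ: "P = (p, t)" "Q = (q, t')" by fastforce
  then have "(q, t) \<in> epi \<Omega> T"
    using assms \<open>\<not> snd P \<le> snd Q\<close> unfolding nearest_point_def epi_def by auto
  then have "dist P Q \<le> dist P (q, t)" using assms unfolding nearest_point_def by blast
  moreover have "dist P (q, t) < dist P Q"
    using \<open>\<not> snd P \<le> snd Q\<close> unfolding PQ dist_norm by (simp add: norm_Pair real_less_rsqrt)
  ultimately show False by simp
qed

lemma epi_steep_pair_flat_normal:
  fixes T :: "'a::real_inner \<Rightarrow> real"
  assumes "x \<in> \<Omega>" "0 < \<epsilon>" "2 * norm (y - x) < \<epsilon> * (T y - T x)"
    and near: "\<And>P. P \<in> closed_segment (x, T x) (y, (T x + T y) / 2) \<Longrightarrow>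
                 \<exists>Q. nearest_point (epi \<Omega> T) P Q"
  obtains P Q n where "P \<in> closed_segment (x, T x) (y, (T x + T y) / 2)"
    "nearest_point (epi \<Omega> T) P Q" "norm n = 1" "n \<in> proximal_normal (epi \<Omega> T) Q" "\<bar>snd n\<bar> < \<epsilon>"
proof -
  have "0 < \<epsilon> * (T y - T x)" using assms(3) norm_ge_zero[of "y - x"] by linarith
  then have "T x < T y" using assms(2) by (simp add: zero_less_mult_iff)
  then have "(x, T x) \<in> epi \<Omega> T" "(y, (T x + T y) / 2) \<notin> epi \<Omega> T"
    using assms(1) unfolding epi_def by auto
  then obtain P Q where PQ: "P \<in> closed_segment (x, T x) (y, (T x + T y) / 2)"
    "nearest_point (epi \<Omega> T) P Q" "P \<noteq> Q" "0 \<le> inner (P - Q) ((y, (T x + T y) / 2) - (x, T x))"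
    using segment_exit_nearest_point[OF _ _ near] by blast
  have dir: "(y, (T x + T y) / 2) - (x, T x) = (y - x, (T y - T x) / 2)" by (simp add: field_simps)
  define n where "n = (1 / norm (P - Q)) *\<^sub>R (P - Q)"
  have "norm n = 1" unfolding n_def using PQ(3) by simp
  moreover have "n \<in> proximal_normal (epi \<Omega> T) Q"
    unfolding n_def by (intro proximal_normal_scaleR nearest_point_proximal_normal PQ(2)) simp
  moreover have "\<bar>snd n\<bar> < \<epsilon>"
  proof -
    have "snd n \<le> 0"
      using nearest_point_epi_snd_le[OF PQ(2)] unfolding n_def by (simp add: divide_nonpos_nonneg)
    have "0 \<le> inner n (y - x, (T y - T x) / 2)"
      unfolding n_def using PQ(4) dir by simp
    also have "\<dots> = inner (fst n) (y - x) + snd n * (T y - T x) / 2"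
      by (cases n) simp
    also have "inner (fst n) (y - x) \<le> norm (y - x)"
    proof -
      have "norm (fst n) \<le> 1" using norm_fst_le[of "fst n" "snd n"] \<open>norm n = 1\<close> by simp
      then show ?thesis
        using norm_cauchy_schwarz[of "fst n" "y - x"] mult_right_le_one_le[of "norm (y - x)" "norm (fst n)"]
        by (simp add: mult.commute)
    qed
    finally have "- snd n * (T y - T x) < \<epsilon> * (T y - T x)" using assms(3) by linarith
    then have "- snd n < \<epsilon>"
      using mult_less_cancel_right_pos[of "T y - T x" "- snd n" \<epsilon>] \<open>T x < T y\<close> by simp
    then show ?thesis using \<open>snd n \<le> 0\<close> by simp
  qed
  ultimately show ?thesis using that PQ(1,2) by blast
qed

lemma non_lipschitz_at_steep_pair:
  fixes T :: "'a::real_normed_vector \<Rightarrow> real"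
  assumes "non_lipschitz_at \<Omega> T xbar" "0 < \<delta>"
  obtains x y where "x \<in> \<Omega>" "y \<in> \<Omega>" "dist x xbar < \<delta>" "dist y xbar < \<delta>"
    "M * norm (y - x) < T y - T x"
proof -
  obtain xs ys :: "nat \<Rightarrow> 'a" where seq: "\<And>i. xs i \<in> \<Omega> \<and> ys i \<in> \<Omega> \<and> xs i \<noteq> ys i"
      "xs \<longlonglongrightarrow> xbar" "ys \<longlonglongrightarrow> xbar"
    and ls: "limsup (\<lambda>i. ereal (\<bar>T (ys i) - T (xs i)\<bar> / norm (ys i - xs i))) = \<infinity>"
    using assms(1) unfolding non_lipschitz_at_def by blast
  have close: "eventually (\<lambda>i. dist (xs i) xbar < \<delta> \<and> dist (ys i) xbar < \<delta>) sequentially"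
    using seq(2,3) assms(2) unfolding tendsto_iff by (simp add: eventually_conj)
  have "\<exists>i. dist (xs i) xbar < \<delta> \<and> dist (ys i) xbar < \<delta> \<and>
            \<bar>M\<bar> < \<bar>T (ys i) - T (xs i)\<bar> / norm (ys i - xs i)"
  proof (rule ccontr)
    assume none: "\<not> ?thesis"
    have "eventually (\<lambda>i. ereal (\<bar>T (ys i) - T (xs i)\<bar> / norm (ys i - xs i)) \<le> ereal \<bar>M\<bar>)
        sequentially"
      using close none by (auto elim!: eventually_mono)
    then have "limsup (\<lambda>i. ereal (\<bar>T (ys i) - T (xs i)\<bar> / norm (ys i - xs i))) \<le> ereal \<bar>M\<bar>"
      by (rule Limsup_bounded)
    then show False using ls by simp
  qed
  then obtain i where i: "dist (xs i) xbar < \<delta>" "dist (ys i) xbar < \<delta>"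
    and ratio: "\<bar>M\<bar> < \<bar>T (ys i) - T (xs i)\<bar> / norm (ys i - xs i)" by blast
  have "0 < norm (ys i - xs i)" using seq(1)[of i] by auto
  with ratio have steep: "\<bar>M\<bar> * norm (ys i - xs i) < \<bar>T (ys i) - T (xs i)\<bar>"
    by (simp add: pos_less_divide_eq)
  have "M * norm (ys i - xs i) \<le> \<bar>M\<bar> * norm (ys i - xs i)" by (intro mult_right_mono) auto
  with steep have steep': "M * norm (ys i - xs i) < \<bar>T (ys i) - T (xs i)\<bar>" by linarith
  show ?thesis
  proof (cases "T (xs i) \<le> T (ys i)")
    case True
    then show ?thesis using that[of "xs i" "ys i"] seq(1) i steep' by simp
  next
    case False
    then show ?thesis using that[of "ys i" "xs i"] seq(1) i steep' by (simp add: norm_minus_commute)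
  qed
qed

lemma epi_flat_normals_near:
  fixes T :: "'a::euclidean_space \<Rightarrow> real"
  assumes "open \<Omega>" "continuous_on \<Omega> T" "xbar \<in> \<Omega>" "locally_closed_set (epi \<Omega> T)"
    and "non_lipschitz_at \<Omega> T xbar" "0 < \<epsilon>"
  shows "\<exists>Q n. Q \<in> epi \<Omega> T \<and> dist Q (xbar, T xbar) < \<epsilon> \<and> norm n = 1 \<and>
           n \<in> proximal_normal (epi \<Omega> T) Q \<and> \<bar>snd n\<bar> < \<epsilon>"
proof -
  define zb where "zb = (xbar, T xbar)"
  have "zb \<in> epi \<Omega> T" unfolding zb_def epi_def using assms(3) by simp
  then obtain r where "0 < r" and cl: "closed (epi \<Omega> T \<inter> cball zb r)"
    using assms(4) unfolding locally_closed_set_def by blast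
  define \<rho> where "\<rho> = min \<epsilon> r / 2"
  have "0 < \<rho>" "2 * \<rho> \<le> \<epsilon>" "2 * \<rho> \<le> r" unfolding \<rho>_def using assms(6) \<open>0 < r\<close> by auto
  have "isCont T xbar" using assms(1-3) continuous_on_eq_continuous_at by blast
  then obtain \<delta> where "0 < \<delta>" and \<delta>: "\<And>x. dist x xbar < \<delta> \<Longrightarrow> dist (T x) (T xbar) < \<rho> / 2"
    using \<open>0 < \<rho>\<close> unfolding continuous_at_eps_delta by (metis half_gt_zero)
  obtain x y where xy: "x \<in> \<Omega>" "y \<in> \<Omega>" "dist x xbar < min \<delta> (\<rho> / 2)" "dist y xbar < min \<delta> (\<rho> / 2)"
    and steep: "2 / \<epsilon> * norm (y - x) < T y - T x"
    using non_lipschitz_at_steep_pair[OF assms(5), where \<delta> = "min \<delta> (\<rho> / 2)" and M = "2 / \<epsilon>"]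
      \<open>0 < \<delta>\<close> \<open>0 < \<rho>\<close> by auto
  have "\<bar>(T x + T y) / 2 - T xbar\<bar> < \<rho> / 2"
  proof -
    have "\<bar>T x - T xbar\<bar> < \<rho> / 2" "\<bar>T y - T xbar\<bar> < \<rho> / 2"
      using xy \<delta>[of x] \<delta>[of y] by (auto simp: dist_real_def)
    then show ?thesis unfolding abs_less_iff by (auto simp: field_simps)
  qed
  then have "dist (x, T x) zb < \<rho>" "dist (y, (T x + T y) / 2) zb < \<rho>"
    using xy \<delta>[of x] \<delta>[of y] norm_Pair_le[of "x - xbar" "T x - T xbar"]
      norm_Pair_le[of "y - xbar" "(T x + T y) / 2 - T xbar"]
    unfolding zb_def by (auto simp: dist_norm)
  then have seg: "closed_segment (x, T x) (y, (T x + T y) / 2) \<subseteq> ball zb \<rho>"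
    by (intro closed_segment_subset convex_ball) (auto simp: dist_commute)
  have near: "\<exists>Q. nearest_point (epi \<Omega> T) P Q"
    if "P \<in> closed_segment (x, T x) (y, (T x + T y) / 2)" for P
  proof -
    have "dist P zb < r / 2" using seg that \<open>2 * \<rho> \<le> r\<close> by (auto simp: dist_commute)
    then show ?thesis using nearest_point_exists_locally_closed[OF \<open>zb \<in> epi \<Omega> T\<close> \<open>0 < r\<close> cl] by metis
  qed
  have "2 * norm (y - x) < \<epsilon> * (T y - T x)"
    using steep assms(6) by (simp add: field_simps)
  then obtain P Q n where P: "P \<in> closed_segment (x, T x) (y, (T x + T y) / 2)"
    and Q: "nearest_point (epi \<Omega> T) P Q"
    and n: "norm n = 1" "n \<in> proximal_normal (epi \<Omega> T) Q" "\<bar>snd n\<bar> < \<epsilon>"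
    using epi_steep_pair_flat_normal[OF xy(1) assms(6) _ near] by blast
  have "dist P zb < \<rho>" using seg P by (auto simp: dist_commute)
  then have "dist Q zb < \<epsilon>"
    using nearest_point_dist_le[OF Q \<open>zb \<in> epi \<Omega> T\<close>] \<open>2 * \<rho> \<le> \<epsilon>\<close> by linarith
  then show ?thesis using Q n unfolding zb_def nearest_point_def by blast
qed

lemma locally_positive_reach_proximal_normal_limit:
  fixes K :: "'b::real_inner set"
  assumes "locally_positive_reach K" "z \<in> K" "\<And>k. Q k \<in> K" "Q \<longlonglongrightarrow> z"
    and "\<And>k. n k \<in> proximal_normal K (Q k)" "n \<longlonglongrightarrow> l"
  shows "l \<in> proximal_normal K z"
proof -
  obtain \<phi> where \<phi>: "continuous_on K \<phi>" "\<forall>z\<in>K. 0 \<le> \<phi> z"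
    and reach: "\<forall>z\<in>K. \<forall>w\<in>K. \<forall>v\<in>proximal_normal K z.
                  inner v (w - z) \<le> \<phi> z * norm v * (norm (w - z))\<^sup>2"
    using assms(1) unfolding locally_positive_reach_def by blast
  have "inner l (w - z) \<le> (\<phi> z * norm l) * (norm (w - z))\<^sup>2" if "w \<in> K" for w
  proof (rule LIMSEQ_le)
    show "(\<lambda>k. inner (n k) (w - Q k)) \<longlonglongrightarrow> inner l (w - z)"
      by (intro tendsto_intros assms)
    have "(\<lambda>k. \<phi> (Q k)) \<longlonglongrightarrow> \<phi> z"
      using continuous_on_tendsto_compose[OF \<phi>(1) assms(4,2)] assms(3) by simp
    then show "(\<lambda>k. \<phi> (Q k) * norm (n k) * (norm (w - Q k))\<^sup>2) \<longlonglongrightarrow> \<phi> z * norm l * (norm (w - z))\<^sup>2"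
      by (intro tendsto_intros assms)
    show "\<exists>N. \<forall>k\<ge>N. inner (n k) (w - Q k) \<le> \<phi> (Q k) * norm (n k) * (norm (w - Q k))\<^sup>2"
      using reach assms(3,5) that by blast
  qed
  then show ?thesis unfolding proximal_normal_def using assms(2) \<phi>(2)
    by (intro CollectI conjI exI[of _ "\<phi> z * norm l"]) auto
qed

lemma flat_unit_normals_imp_horizontal_normal:
  fixes K :: "('a::euclidean_space \<times> real) set"
  assumes "locally_positive_reach K" "z \<in> K"
    and flat: "\<And>\<epsilon>. 0 < \<epsilon> \<Longrightarrow> \<exists>Q n. Q \<in> K \<and> dist Q z < \<epsilon> \<and> norm n = 1 \<and>
                               n \<in> proximal_normal K Q \<and> \<bar>snd n\<bar> < \<epsilon>"
  shows "\<exists>\<zeta>. \<zeta> \<noteq> 0 \<and> (\<zeta>, 0) \<in> proximal_normal K z"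
proof -
  have "\<exists>Q n. Q \<in> K \<and> dist Q z < inverse (real (Suc k)) \<and> norm n = 1 \<and>
                 n \<in> proximal_normal K Q \<and> \<bar>snd n\<bar> < inverse (real (Suc k))" for k
    by (rule flat) simp
  then obtain Q n where "\<And>k. Q k \<in> K \<and> dist (Q k) z < inverse (real (Suc k)) \<and> norm (n k) = 1 \<and>
      n k \<in> proximal_normal K (Q k) \<and> \<bar>snd (n k)\<bar> < inverse (real (Suc k))"
    by metis
  then have QK: "\<And>k. Q k \<in> K" and Qz: "\<And>k. dist (Q k) z < inverse (real (Suc k))"
    and n: "\<And>k. norm (n k) = 1" "\<And>k. n k \<in> proximal_normal K (Q k)"
    and flat_n: "\<And>k. \<bar>snd (n k)\<bar> < inverse (real (Suc k))"
    by auto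
  have "(\<lambda>k. dist (Q k) z) \<longlonglongrightarrow> 0"
    using Qz by (intro Lim_null_comparison[OF _ LIMSEQ_inverse_real_of_nat])
      (auto intro: always_eventually less_imp_le)
  then have "Q \<longlonglongrightarrow> z" by (rule tendsto_dist_iff[THEN iffD2])
  have snd_n: "(\<lambda>k. snd (n k)) \<longlonglongrightarrow> 0"
    using flat_n by (intro Lim_null_comparison[OF _ LIMSEQ_inverse_real_of_nat])
      (auto intro: always_eventually less_imp_le)
  have "bounded (range n)" using n(1) by (auto simp: bounded_iff)
  then obtain r l where r: "strict_mono r" and l: "(n \<circ> r) \<longlonglongrightarrow> l"
    using bounded_imp_convergent_subsequence by blast
  have "norm l = 1" using tendsto_norm[OF l] n(1) by (simp add: comp_def LIMSEQ_const_iff)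
  moreover have "snd l = 0"
    using tendsto_snd[OF l] LIMSEQ_subseq_LIMSEQ[OF snd_n r] by (simp add: comp_def LIMSEQ_unique)
  ultimately obtain \<zeta> where \<zeta>: "l = (\<zeta>, 0)" "\<zeta> \<noteq> 0" by (cases l) force
  have "l \<in> proximal_normal K z"
    using LIMSEQ_subseq_LIMSEQ[OF \<open>Q \<longlonglongrightarrow> z\<close> r] l QK n(2)
    by (intro locally_positive_reach_proximal_normal_limit[OF assms(1,2), of "Q \<circ> r" "n \<circ> r"]) auto
  then show ?thesis using \<zeta> by blast
qed

lemma horizontal_normal_steep:
  fixes T :: "'a::real_inner \<Rightarrow> real"
  assumes "(\<zeta>, 0) \<in> proximal_normal (epi \<Omega> T) (xbar, T xbar)" "\<zeta> \<noteq> 0"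
  obtains s\<^sub>0 where "0 < s\<^sub>0" "\<And>s. 0 < s \<Longrightarrow> s < s\<^sub>0 \<Longrightarrow> xbar + s *\<^sub>R \<zeta> \<in> \<Omega> \<Longrightarrow>
    M * (s * norm \<zeta>) < \<bar>T (xbar + s *\<^sub>R \<zeta>) - T xbar\<bar>"
proof -
  obtain \<sigma> where "0 \<le> \<sigma>" and \<sigma>: "\<And>w. w \<in> epi \<Omega> T \<Longrightarrow>
      inner (\<zeta>, 0) (w - (xbar, T xbar)) \<le> \<sigma> * (norm (w - (xbar, T xbar)))\<^sup>2"
    using assms(1) unfolding proximal_normal_def by blast
  define c where "c = (\<sigma> + 1) * (M\<^sup>2 + 1)"
  have "0 < c" unfolding c_def using \<open>0 \<le> \<sigma>\<close> by (simp add: add_nonneg_pos)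
  show ?thesis
  proof
    show "0 < 1 / c" using \<open>0 < c\<close> by simp
    fix s assume s: "0 < s" "s < 1 / c" "xbar + s *\<^sub>R \<zeta> \<in> \<Omega>"
    define D where "D = T (xbar + s *\<^sub>R \<zeta>) - T xbar"
    define a where "a = (norm \<zeta>)\<^sup>2"
    have "0 < a" unfolding a_def using assms(2) by simp
    have "s * a \<le> \<sigma> * (s\<^sup>2 * a + D\<^sup>2)"
      using \<sigma>[of "(xbar + s *\<^sub>R \<zeta>, T (xbar + s *\<^sub>R \<zeta>))"] s(3)
      unfolding epi_def a_def D_def by (simp add: norm_Pair power_mult_distrib power2_norm_eq_inner)
    show "M * (s * norm \<zeta>) < \<bar>D\<bar>"
    proof (rule ccontr)
      assume "\<not> M * (s * norm \<zeta>) < \<bar>D\<bar>"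
      then have "\<bar>D\<bar>\<^sup>2 \<le> (M * (s * norm \<zeta>))\<^sup>2" by (intro power_mono) auto
      then have D: "D\<^sup>2 \<le> M\<^sup>2 * s\<^sup>2 * a" unfolding a_def by (simp add: power_mult_distrib)
      have "s * a \<le> \<sigma> * (s\<^sup>2 * a + D\<^sup>2)" by fact
      also have "\<dots> \<le> \<sigma> * (s\<^sup>2 * a + M\<^sup>2 * s\<^sup>2 * a)"
        using D \<open>0 \<le> \<sigma>\<close> by (intro mult_left_mono) auto
      also have "\<dots> \<le> (\<sigma> + 1) * (s\<^sup>2 * a + M\<^sup>2 * s\<^sup>2 * a)"
        using \<open>0 < a\<close> by (intro mult_right_mono) auto
      also have "\<dots> = (s * a) * (s * c)" unfolding c_def by (simp add: power2_eq_square algebra_simps)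
      finally have "1 \<le> s * c" using \<open>0 < s\<close> \<open>0 < a\<close> by simp
      then show False using s(2) \<open>0 < c\<close> by (simp add: field_simps)
    qed
  qed
qed

lemma horizontal_normal_imp_non_lipschitz_at:
  fixes T :: "'a::real_inner \<Rightarrow> real"
  assumes "open \<Omega>" "xbar \<in> \<Omega>" "\<zeta> \<noteq> 0" "(\<zeta>, 0) \<in> proximal_normal (epi \<Omega> T) (xbar, T xbar)"
  shows "non_lipschitz_at \<Omega> T xbar"
proof -
  obtain \<rho> where "0 < \<rho>" "ball xbar \<rho> \<subseteq> \<Omega>" using assms(1,2) open_contains_ball by blast
  define s where "s k = \<rho> / (2 * norm \<zeta>) * inverse (real (Suc k))" for k
  define ys where "ys k = xbar + s k *\<^sub>R \<zeta>" for k
  have s_pos: "0 < s k" for k unfolding s_def using \<open>0 < \<rho>\<close> assms(3) by simp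
  have "s \<longlonglongrightarrow> 0" unfolding s_def by (intro tendsto_mult_right_zero LIMSEQ_inverse_real_of_nat)
  have ys: "ys k \<in> \<Omega>" for k
  proof -
    have "s k * norm \<zeta> = \<rho> / 2 * inverse (real (Suc k))" unfolding s_def using assms(3) by simp
    also have "\<dots> \<le> \<rho> / 2" using \<open>0 < \<rho>\<close> by (intro mult_left_le) (auto simp: field_simps)
    finally have "s k * norm \<zeta> \<le> \<rho> / 2" .
    then show ?thesis using \<open>ball xbar \<rho> \<subseteq> \<Omega>\<close> \<open>0 < \<rho>\<close> s_pos[of k]
      unfolding ys_def by (auto simp: dist_norm)
  qed
  have "ys \<longlonglongrightarrow> xbar + 0 *\<^sub>R \<zeta>" unfolding ys_def by (intro tendsto_intros \<open>s \<longlonglongrightarrow> 0\<close>)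
  then have "ys \<longlonglongrightarrow> xbar" by simp
  define R where "R k = \<bar>T (ys k) - T xbar\<bar> / norm (ys k - xbar)" for k
  have "eventually (\<lambda>k. ereal M < ereal (R k)) sequentially" for M
  proof -
    obtain s\<^sub>0 where "0 < s\<^sub>0" and steep: "\<And>s. 0 < s \<Longrightarrow> s < s\<^sub>0 \<Longrightarrow> xbar + s *\<^sub>R \<zeta> \<in> \<Omega> \<Longrightarrow>
        M * (s * norm \<zeta>) < \<bar>T (xbar + s *\<^sub>R \<zeta>) - T xbar\<bar>"
      using horizontal_normal_steep[OF assms(4,3), where M = M] by blast
    show ?thesis using order_tendstoD(2)[OF \<open>s \<longlonglongrightarrow> 0\<close> \<open>0 < s\<^sub>0\<close>]
    proof (rule eventually_mono)
      fix k assume "s k < s\<^sub>0"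
      then have "M * (s k * norm \<zeta>) < \<bar>T (ys k) - T xbar\<bar>"
        using steep s_pos ys unfolding ys_def by blast
      then show "ereal M < ereal (R k)"
        unfolding R_def ys_def using s_pos[of k] assms(3) by (simp add: field_simps)
    qed
  qed
  then have "limsup (\<lambda>k. ereal (R k)) = \<infinity>"
    by (intro lim_imp_Limsup) (auto simp: tendsto_PInfty)
  moreover have "ys k \<noteq> xbar" for k unfolding ys_def using s_pos[of k] assms(3) by simp
  ultimately show ?thesis unfolding non_lipschitz_at_def R_def
    using assms(2) ys \<open>ys \<longlonglongrightarrow> xbar\<close>
    by (intro exI[of _ "\<lambda>_. xbar"] exI[of _ ys]) auto
qed

theorem proposition3p3:
  fixes \<Omega> :: "'a::euclidean_space set" and T :: "'a \<Rightarrow> real" and xbar :: 'a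
  assumes "open \<Omega>"
    and "continuous_on \<Omega> T"
    and "locally_positive_reach (epi \<Omega> T)"
    and "xbar \<in> \<Omega>"
  shows "non_lipschitz_at \<Omega> T xbar \<longleftrightarrow>
         (\<exists>\<zeta>::'a. \<zeta> \<noteq> 0 \<and> (\<zeta>, 0::real) \<in> proximal_normal (epi \<Omega> T) (xbar, T xbar))"
proof
  assume "non_lipschitz_at \<Omega> T xbar"
  moreover have "(xbar, T xbar) \<in> epi \<Omega> T" unfolding epi_def using assms(4) by simp
  moreover have "locally_closed_set (epi \<Omega> T)"
    using assms(3) unfolding locally_positive_reach_def by blast
  ultimately show "\<exists>\<zeta>. \<zeta> \<noteq> 0 \<and> (\<zeta>, 0) \<in> proximal_normal (epi \<Omega> T) (xbar, T xbar)"
    by (intro flat_unit_normals_imp_horizontal_normal[OF assms(3)] epi_flat_normals_near[OF assms(1,2,4)])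
next
  assume "\<exists>\<zeta>. \<zeta> \<noteq> 0 \<and> (\<zeta>, 0) \<in> proximal_normal (epi \<Omega> T) (xbar, T xbar)"
  then show "non_lipschitz_at \<Omega> T xbar"
    using horizontal_normal_imp_non_lipschitz_at[OF assms(1,4)] by blast
qed

end
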